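(* Let $R$ be a quotient root system, $\Phi\subseteq R^+$ an inversion set, and $A,B,C$ connected components of $G_\Phi^{\Phi^c}$. (i) If $A + B = A + C \neq A$, then $B = C$. (ii) If the standard sum $A + B + C$ is defined and $A + B + C = A + B$, then $A + C = A$ or $B + C = B$. (iii) If the standard sum $A + B + C$ is defined, $B+C$ is defined, and $A + B + C = B + C$, then $A + B = B$ or $B + C = C$.
   Context: A quotient root system (QRS) $R$ is the set of non-zero images of a root system $\Delta$ (with base $\Sigma$) under the orthogonal projection of its ambient Euclidean space onto $(\mathrm{span}\,J)^\perp$ for some $J\subsetneq\Sigma$; its base consists of the images of $\Sigma\setminus J$, and every root is an integer combination of the base with all coefficients $\ge0$ (positive roots, $R^+$) or all $\le0$. $\Phi\subseteq R^+$ is closed if $\alpha,\beta\in\Phi$, $\alpha+\beta\in R$ imply $\alpha+\beta\in\Phi$; co-closed if $\Phi^c:=R^+\setminus\Phi$ is closed; an inversion set if both. $G_\Phi^{\Phi^c}$ is the graph with vertex set $\Phi$ in which $\alpha,\alpha'$ are adjacent iff $\alpha-\alpha'\in\Phi^c\cup(-\Phi^c)$; components are its connected components. Addition of components: for components $A,B$ let $Z=\{\alpha+\beta:\alpha\in A,\beta\in B\}\cap R$. If $Z\ne\emptyset$ lies in a single component $C$, $A+B:=C$. If $Z$ meets more than one component, then (as established in the paper) $A=B$ and $Z$ meets exactly two components, $A$ and some $C\ne A$; then $A+A:=C$. If $Z=\emptyset$, $A+B$ is undefined. The standard sum $A+B+C$ means $(A+B)+C$ with both sums defined. Equalities between sums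 are understood to include that the sums involved are defined. *)

theory Defs
  imports "HOL-Analysis.Analysis"
begin

definition root_system :: "'a::euclidean_space set \<Rightarrow> bool" where
  "root_system \<Delta> \<longleftrightarrow>
     finite \<Delta> \<and> 0 \<notin> \<Delta> \<and>
     (\<forall>\<alpha>\<in>\<Delta>. \<forall>\<beta>\<in>\<Delta>. \<beta> - (2 * (\<beta> \<bullet> \<alpha>) / (\<alpha> \<bullet> \<alpha>)) *\<^sub>R \<alpha> \<in> \<Delta>) \<and>
     (\<forall>\<alpha>\<in>\<Delta>. \<forall>\<beta>\<in>\<Delta>. 2 * (\<beta> \<bullet> \<alpha>) / (\<alpha> \<bullet> \<alpha>) \<in> \<int>) \<and>
     (\<forall>\<alpha>\<in>\<Delta>. \<forall>c::real. c *\<^sub>R \<alpha> \<in> \<Delta> \<longrightarrow> c = 1 \<or> c = -1)"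

definition is_base :: "'a::euclidean_space set \<Rightarrow> 'a set \<Rightarrow> bool" where
  "is_base \<Delta> \<Sigma> \<longleftrightarrow> \<Sigma> \<subseteq> \<Delta> \<and> independent \<Sigma> \<and>
     (\<forall>\<alpha>\<in>\<Delta>. \<exists>c::'a \<Rightarrow> int. \<alpha> = (\<Sum>\<sigma>\<in>\<Sigma>. of_int (c \<sigma>) *\<^sub>R \<sigma>) \<and>
        ((\<forall>\<sigma>\<in>\<Sigma>. c \<sigma> \<ge> 0) \<or> (\<forall>\<sigma>\<in>\<Sigma>. c \<sigma> \<le> 0)))"

definition qproj :: "'a::euclidean_space set \<Rightarrow> 'a \<Rightarrow> 'a" where
  "qproj J v = (THE w. w \<in> orthogonal_comp (span J) \<and> v - w \<in> span J)"

definition QRS :: "'a::euclidean_space set \<Rightarrow> 'a set \<Rightarrow> 'a set" where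
  "QRS \<Delta> J = qproj J ` \<Delta> - {0}"

definition QRS_base :: "'a::euclidean_space set \<Rightarrow> 'a set \<Rightarrow> 'a set" where
  "QRS_base \<Sigma> J = qproj J ` (\<Sigma> - J)"

definition QRS_pos :: "'a::euclidean_space set \<Rightarrow> 'a set \<Rightarrow> 'a set \<Rightarrow> 'a set" where
  "QRS_pos \<Delta> \<Sigma> J = {\<beta> \<in> QRS \<Delta> J. \<exists>c::'a \<Rightarrow> int.
      \<beta> = (\<Sum>\<tau>\<in>QRS_base \<Sigma> J. of_int (c \<tau>) *\<^sub>R \<tau>) \<and> (\<forall>\<tau>\<in>QRS_base \<Sigma> J. c \<tau> \<ge> 0)}"

definition closed_in_rs :: "'a::euclidean_space set \<Rightarrow> 'a set \<Rightarrow> bool" where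
  "closed_in_rs R \<Phi> \<longleftrightarrow> (\<forall>\<alpha>\<in>\<Phi>. \<forall>\<beta>\<in>\<Phi>. \<alpha> + \<beta> \<in> R \<longrightarrow> \<alpha> + \<beta> \<in> \<Phi>)"

definition inversion_set :: "'a::euclidean_space set \<Rightarrow> 'a set \<Rightarrow> 'a set \<Rightarrow> bool" where
  "inversion_set R Rpos \<Phi> \<longleftrightarrow> \<Phi> \<subseteq> Rpos \<and> closed_in_rs R \<Phi> \<and> closed_in_rs R (Rpos - \<Phi>)"

definition graph_edges :: "'a::euclidean_space set \<Rightarrow> 'a set \<Rightarrow> ('a \<times> 'a) set" where
  "graph_edges Rpos \<Phi> = {(\<alpha>, \<alpha>'). \<alpha> \<in> \<Phi> \<and> \<alpha>' \<in> \<Phi> \<and>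
      (\<alpha> - \<alpha>' \<in> Rpos - \<Phi> \<or> \<alpha>' - \<alpha> \<in> Rpos - \<Phi>)}"

definition components :: "'a::euclidean_space set \<Rightarrow> 'a set \<Rightarrow> 'a set set" where
  "components Rpos \<Phi> = \<Phi> // ((graph_edges Rpos \<Phi>)\<^sup>*)"

definition comp_sumset :: "'a::euclidean_space set \<Rightarrow> 'a set \<Rightarrow> 'a set \<Rightarrow> 'a set" where
  "comp_sumset R A B = {\<alpha> + \<beta> | \<alpha> \<beta>. \<alpha> \<in> A \<and> \<beta> \<in> B} \<inter> R"

text \<open>\<open>comp_add R Rpos \<Phi> A B = Some C\<close> means that \<open>A + B\<close> is defined and equals \<open>C\<close>;
  \<open>None\<close> means undefined.\<close>
definition comp_add ::
  "'a::euclidean_space set \<Rightarrow> 'a set \<Rightarrow> 'a set \<Rightarrow> 'a set \<Rightarrow> 'a set \<Rightarrow> 'a set option" where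
  "comp_add R Rpos \<Phi> A B =
     (let Z = comp_sumset R A B; K = components Rpos \<Phi> in
      if Z = {} then None
      else if (\<exists>C\<in>K. Z \<subseteq> C) then Some (THE C. C \<in> K \<and> Z \<subseteq> C)
      else if A = B \<and> (\<exists>C\<in>K. C \<noteq> A \<and> Z \<subseteq> A \<union> C \<and> Z \<inter> A \<noteq> {} \<and> Z \<inter> C \<noteq> {})
        then Some (THE C. C \<in> K \<and> C \<noteq> A \<and> Z \<subseteq> A \<union> C \<and> Z \<inter> A \<noteq> {} \<and> Z \<inter> C \<noteq> {})
      else None)"

end

theory Submission
  imports Defs
begin

text \<open>
  Only a few properties of the quotient root system \<open>R\<close> are used: it is finite, symmetric and
  split by its positive roots, \<open>\<Phi>\<close> is a closed set of positive roots, and whenever \<open>\<alpha> + \<beta>\<close>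
  and \<open>\<alpha> + \<beta> + \<gamma>\<close> are roots, so is \<open>\<alpha> + \<gamma>\<close> or \<open>\<beta> + \<gamma>\<close> (unless one of them is \<open>0\<close>). The
  last property holds because two roots of the quotient at an obtuse angle add up to a root,
  a fact lifted from \<open>\<Delta>\<close> by averaging over the fibres of the projection.

  By the triple property, moving one summand of a sum in \<open>\<Phi>\<close> along an edge either moves the
  sum along a parallel edge, or is compensated by the other summand, or makes the sum adjacent
  to the moved summand. An argument on shortest paths turns this into the statement that sums
  and differences respect components: \<open>a + c\<close> and \<open>a' + c'\<close> are linked whenever \<open>a, a'\<close> and
  \<open>c, c'\<close> are, but \<open>a, c\<close> are not; \<open>u - a\<close> and \<open>v - a\<close> are linked whenever \<open>u, v\<close> are, but
  \<open>u, a\<close> are not. Now (i) is cancellation by differences; for (ii) an element of \<open>A + B\<close> is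
  split as \<open>p + q\<close>, and the triple property for \<open>p, q, c\<close> shows that \<open>C\<close> is absorbed by the
  component of \<open>p\<close> or of \<open>q\<close>; (iii) is (i) applied to \<open>C + B = C + (A + B)\<close>.
\<close>

section \<open>Configurations linked along shortest paths\<close>

lemma finite_translation_closed_empty:
  fixes \<delta> :: "'a::real_vector"
  assumes fin: "finite G" and nz: "\<delta> \<noteq> 0" and closed: "\<And>u. u \<in> G \<Longrightarrow> u + \<delta> \<in> G"
  shows "G = {}"
proof (rule ccontr)
  assume "G \<noteq> {}"
  then obtain u where "u \<in> G" by blast
  have orbit: "u + real n *\<^sub>R \<delta> \<in> G" for n
  proof (induction n)
    case (Suc n)
    then show ?case using closed[OF Suc] by (simp add: algebra_simps)
  qed (simp add: \<open>u \<in> G\<close>)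
  have "inj (\<lambda>n. u + real n *\<^sub>R \<delta>)"
    using nz by (intro injI) simp
  then have "infinite (range (\<lambda>n. u + real n *\<^sub>R \<delta>))"
    by (rule range_inj_infinite)
  moreover have "range (\<lambda>n. u + real n *\<^sub>R \<delta>) \<subseteq> G"
    using orbit by blast
  ultimately show False
    using fin finite_subset by blast
qed

lemma relpow_translate_along_path:
  fixes E :: "('a::plus \<times> 'a) set"
  assumes step: "\<And>u w. u \<in> G \<Longrightarrow> (u, w) \<in> E \<Longrightarrow> (w, u + \<delta>) \<in> E ^^ (k - 1)
                    \<Longrightarrow> w \<in> G \<and> (u + \<delta>, w + \<delta>) \<in> E"
  shows "j \<le> k \<Longrightarrow> u \<in> G \<Longrightarrow> (u, w) \<in> E ^^ j \<Longrightarrow> (w, u + \<delta>) \<in> E ^^ (k - j)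
           \<Longrightarrow> w \<in> G \<and> (u + \<delta>, w + \<delta>) \<in> E ^^ j"
proof (induction j arbitrary: w)
  case (Suc j)
  from \<open>(u, w) \<in> E ^^ Suc j\<close> obtain w0 where uw0: "(u, w0) \<in> E ^^ j" and w0w: "(w0, w) \<in> E"
    by (rule relpow_Suc_E)
  have "(w0, u + \<delta>) \<in> E ^^ Suc (k - Suc j)"
    using w0w Suc.prems(4) by (rule relpow_Suc_I2)
  then have "(w0, u + \<delta>) \<in> E ^^ (k - j)"
    using Suc.prems(1) by (simp add: Suc_diff_Suc)
  with Suc.IH Suc.prems uw0 have w0G: "w0 \<in> G" and shifted: "(u + \<delta>, w0 + \<delta>) \<in> E ^^ j"
    by auto
  have "(w, w0 + \<delta>) \<in> E ^^ (k - Suc j + j)"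
    using Suc.prems(4) shifted by (auto simp: relpow_add)
  then have "(w, w0 + \<delta>) \<in> E ^^ (k - 1)"
    using Suc.prems(1) by (simp add: Suc_diff_Suc)
  from step[OF w0G w0w this] have "w \<in> G" and "(w0 + \<delta>, w + \<delta>) \<in> E"
    by auto
  with shifted show ?case
    by (auto intro: relpow_Suc_I)
qed simp

text \<open>Take a configuration whose path from \<open>u\<close> to \<open>v\<close> has minimal length \<open>k\<close>. Along a
  shortest path from \<open>u\<close>, \<open>step\<close> can never produce a configuration ending in \<open>v\<close> (its path
  would be shorter), so \<open>v\<close> is dragged along: the first components of such minimal
  configurations form a finite set closed under translation by \<open>v - u \<noteq> 0\<close>.\<close>
lemma no_linked_configuration:
  fixes Cfg :: "'b \<Rightarrow> 'a::real_vector \<Rightarrow> 'a \<Rightarrow> bool" and E :: "('a \<times> 'a) set"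
  assumes fin: "finite {u. \<exists>c v. Cfg c u v}"
    and no_loop: "\<And>c u. \<not> Cfg c u u"
    and step: "\<And>c u v w. Cfg c u v \<Longrightarrow> (u, w) \<in> E
                 \<Longrightarrow> (\<exists>c'. Cfg c' w v) \<or> (Cfg c w (v + (w - u)) \<and> (v, v + (w - u)) \<in> E)"
    and cfg: "Cfg c u v"
  shows "(u, v) \<notin> E\<^sup>*"
proof
  assume "(u, v) \<in> E\<^sup>*"
  define linked_in where "linked_in n \<longleftrightarrow> (\<exists>c u v. Cfg c u v \<and> (u, v) \<in> E ^^ n)" for n
  have "\<exists>n. linked_in n"
    using cfg \<open>(u, v) \<in> E\<^sup>*\<close> unfolding linked_in_def by (blast dest: rtrancl_imp_relpow)
  define k where "k = (LEAST n. linked_in n)"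
  have shorter: "\<not> Cfg c u v" if "(u, v) \<in> E ^^ n" "n < k" for c u v n
    using not_less_Least[of n linked_in] that unfolding k_def linked_in_def by blast
  obtain c0 u0 v0 where cfg0: "Cfg c0 u0 v0" and path0: "(u0, v0) \<in> E ^^ k"
    using LeastI_ex[OF \<open>\<exists>n. linked_in n\<close>] unfolding k_def linked_in_def by blast
  define \<delta> where "\<delta> = v0 - u0"
  have "\<delta> \<noteq> 0"
    using no_loop cfg0 unfolding \<delta>_def by auto
  have "k \<noteq> 0"
    using path0 \<open>\<delta> \<noteq> 0\<close> unfolding \<delta>_def by (cases k) auto
  define G where "G = {u. Cfg c0 u (u + \<delta>) \<and> (u, u + \<delta>) \<in> E ^^ k}"
  have G_step: "w \<in> G \<and> (u + \<delta>, w + \<delta>) \<in> E"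
    if "u \<in> G" "(u, w) \<in> E" "(w, u + \<delta>) \<in> E ^^ (k - 1)" for u w
  proof -
    have "(w, u + \<delta>) \<in> E ^^ (k - 1)" "k - 1 < k"
      using that \<open>k \<noteq> 0\<close> by auto
    then have "\<not> Cfg c' w (u + \<delta>)" for c'
      by (rule shorter)
    moreover have "(\<exists>c'. Cfg c' w (u + \<delta>)) \<or>
        (Cfg c0 w (u + \<delta> + (w - u)) \<and> (u + \<delta>, u + \<delta> + (w - u)) \<in> E)"
      using step[of c0 u "u + \<delta>" w] that unfolding G_def by blast
    moreover have "u + \<delta> + (w - u) = w + \<delta>"
      by simp
    ultimately have "Cfg c0 w (w + \<delta>)" and edge: "(u + \<delta>, w + \<delta>) \<in> E"
      by auto
    moreover have "(w, w + \<delta>) \<in> E ^^ Suc (k - 1)"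
      using that(3) edge by (rule relpow_Suc_I)
    ultimately show ?thesis
      using \<open>k \<noteq> 0\<close> unfolding G_def by simp
  qed
  have "G = {}"
  proof (rule finite_translation_closed_empty[OF _ \<open>\<delta> \<noteq> 0\<close>])
    show "finite G"
      by (rule finite_subset[OF _ fin]) (auto simp: G_def)
    show "u + \<delta> \<in> G" if "u \<in> G" for u
      using relpow_translate_along_path[of G E \<delta> k k u "u + \<delta>", OF G_step] that
      unfolding G_def by auto
  qed
  moreover have "u0 \<in> G"
    using cfg0 path0 unfolding G_def \<delta>_def by simp
  ultimately show False
    by simp
qed

section \<open>Sums and differences of linked elements\<close>

locale closed_positive_subset =
  fixes R Rpos \<Phi> :: "'a::euclidean_space set"
  assumes finite_R: "finite R"
    and uminus_R: "x \<in> R \<Longrightarrow> -x \<in> R"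
    and Rpos_subset: "Rpos \<subseteq> R"
    and R_pos_or_neg: "x \<in> R \<Longrightarrow> x \<in> Rpos \<or> -x \<in> Rpos"
    and Rpos_not_neg: "x \<in> Rpos \<Longrightarrow> -x \<notin> Rpos"
    and Rpos_add_closed: "x \<in> Rpos \<Longrightarrow> y \<in> Rpos \<Longrightarrow> x + y \<in> R \<Longrightarrow> x + y \<in> Rpos"
    and R_add_triple: "\<alpha> \<in> R \<Longrightarrow> \<beta> \<in> R \<Longrightarrow> \<gamma> \<in> R \<Longrightarrow> \<alpha> + \<beta> \<in> R \<Longrightarrow> \<alpha> + \<beta> + \<gamma> \<in> R
      \<Longrightarrow> \<alpha> + \<gamma> \<noteq> 0 \<Longrightarrow> \<beta> + \<gamma> \<noteq> 0 \<Longrightarrow> \<alpha> + \<gamma> \<in> R \<or> \<beta> + \<gamma> \<in> R"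
    and Phi_subset: "\<Phi> \<subseteq> Rpos"
    and Phi_add_closed: "x \<in> \<Phi> \<Longrightarrow> y \<in> \<Phi> \<Longrightarrow> x + y \<in> R \<Longrightarrow> x + y \<in> \<Phi>"
begin

abbreviation E :: "('a \<times> 'a) set" where
  "E \<equiv> graph_edges Rpos \<Phi>"

definition edge_root :: "'a \<Rightarrow> bool" where
  "edge_root g \<longleftrightarrow> g \<in> Rpos - \<Phi> \<or> -g \<in> Rpos - \<Phi>"

lemma Phi_in_R: "x \<in> \<Phi> \<Longrightarrow> x \<in> R"
  using Phi_subset Rpos_subset by auto

lemma edge_root_in_R: "edge_root g \<Longrightarrow> g \<in> R"
  unfolding edge_root_def using Rpos_subset uminus_R by force

lemma edge_root_uminus [simp]: "edge_root (-g) \<longleftrightarrow> edge_root g"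
  unfolding edge_root_def by auto

lemma edge_root_not_in_Phi: "edge_root g \<Longrightarrow> g \<notin> \<Phi>"
  unfolding edge_root_def using Rpos_not_neg Phi_subset by fastforce

lemma Phi_add_nonzero: "x \<in> \<Phi> \<Longrightarrow> y \<in> \<Phi> \<Longrightarrow> x + y \<noteq> 0"
  using Phi_subset Rpos_not_neg by (fastforce simp: add_eq_0_iff)

lemma Phi_add_edge_root_nonzero: "x \<in> \<Phi> \<Longrightarrow> edge_root g \<Longrightarrow> x + g \<noteq> 0"
  using edge_root_not_in_Phi[of "-g"] by (auto simp: add_eq_0_iff)

lemma R_trichotomy: "x \<in> R \<Longrightarrow> x \<in> \<Phi> \<or> edge_root x \<or> -x \<in> \<Phi>"
  using R_pos_or_neg unfolding edge_root_def by blast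

lemma Phi_add_edge_root:
  assumes p: "p \<in> \<Phi>" and g: "edge_root g" and pg: "p + g \<in> R"
  shows "p + g \<in> \<Phi> \<or> edge_root (p + g)"
proof -
  have "-(p + g) \<notin> \<Phi>"
  proof
    assume neg: "-(p + g) \<in> \<Phi>"
    show False
    proof (cases "g \<in> Rpos - \<Phi>")
      case True
      then have "p + g \<in> Rpos"
        using Rpos_add_closed p Phi_subset pg by auto
      then show False
        using neg Rpos_not_neg Phi_subset by blast
    next
      case False
      have "p + -(p + g) = -g"
        by simp
      then have "-g \<in> \<Phi>"
        using Phi_add_closed[OF p neg] edge_root_in_R[of "-g"] g by simp
      then show False
        using g edge_root_not_in_Phi[of "-g"] by simp
    qed
  qed
  then show ?thesis
    using R_trichotomy[OF pg] by blast
qed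

lemma graph_edges_iff: "(x, y) \<in> E \<longleftrightarrow> x \<in> \<Phi> \<and> y \<in> \<Phi> \<and> edge_root (y - x)"
  unfolding graph_edges_def edge_root_def by (auto simp: minus_diff_eq)

lemma sym_graph_edges: "sym E"
  by (rule symI) (metis graph_edges_iff edge_root_uminus minus_diff_eq)

lemma rtrancl_graph_edges_sym: "(x, y) \<in> E\<^sup>* \<Longrightarrow> (y, x) \<in> E\<^sup>*"
  using sym_rtrancl[OF sym_graph_edges] by (rule symD)

lemma finite_Phi: "finite \<Phi>"
  using finite_subset[OF _ finite_R] Phi_in_R by blast

lemma rtrancl_graph_edges_in_Phi: "(x, y) \<in> E\<^sup>* \<Longrightarrow> x \<in> \<Phi> \<Longrightarrow> y \<in> \<Phi>"
  by (induction rule: rtrancl_induct) (auto simp: graph_edges_iff)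

lemma sum_edge_left:
  assumes p: "p \<in> \<Phi>" and q: "q \<in> \<Phi>" and pq: "p + q \<in> R" and pp': "(p, p') \<in> E"
  shows "(p + q, p' + q) \<in> E \<or> (q, q - (p' - p)) \<in> E \<or> (p + q, p') \<in> E"
proof -
  define g where "g = p' - p"
  have g: "edge_root g" and p': "p' \<in> \<Phi>" and p'_eq: "p' = p + g"
    using pp' unfolding graph_edges_iff g_def by auto
  have pqP: "p + q \<in> \<Phi>"
    using Phi_add_closed p q pq by auto
  have "p' + q \<in> R \<or> -g + q \<in> R"
  proof (rule R_add_triple)
    show "p' \<in> R" "-g \<in> R" "q \<in> R" "p' + - g \<in> R" "p' + - g + q \<in> R"
      using p' p q pq g edge_root_in_R[of "-g"] Phi_in_R by (auto simp: p'_eq)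
    show "p' + q \<noteq> 0"
      using Phi_add_nonzero[OF p' q] .
    show "- g + q \<noteq> 0"
      using Phi_add_edge_root_nonzero[OF q, of "-g"] g by (simp add: add.commute)
  qed
  then show ?thesis
  proof
    assume "p' + q \<in> R"
    then have "p' + q \<in> \<Phi>"
      using Phi_add_closed p' q by auto
    then show ?thesis
      using pqP g by (simp add: graph_edges_iff p'_eq algebra_simps)
  next
    assume "-g + q \<in> R"
    then have "q - g \<in> \<Phi> \<or> edge_root (q - g)"
      using Phi_add_edge_root[OF q, of "-g"] g by (simp add: algebra_simps)
    then show ?thesis
    proof
      assume "q - g \<in> \<Phi>"
      then have "(q, q - g) \<in> E"
        using q g by (simp add: graph_edges_iff)
      then show ?thesis
        by (simp add: g_def)
    next
      assume "edge_root (q - g)"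
      moreover have "p' - (p + q) = -(q - g)"
        by (simp add: p'_eq)
      ultimately have "edge_root (p' - (p + q))"
        by (metis edge_root_uminus)
      then have "(p + q, p') \<in> E"
        using pqP p' by (simp add: graph_edges_iff)
      then show ?thesis
        by simp
    qed
  qed
qed

lemma sum_edge_split:
  assumes p: "p \<in> \<Phi>" and q: "q \<in> \<Phi>" and s: "(p + q, s) \<in> E"
  shows "(\<exists>p'. (p, p') \<in> E \<and> s = p' + q) \<or> (\<exists>q'. (q, q') \<in> E \<and> s = p + q')
    \<or> (s, p) \<in> E \<or> (s, q) \<in> E"
proof -
  define g where "g = s - (p + q)"
  have g: "edge_root g" and sP: "s \<in> \<Phi>" and pqP: "p + q \<in> \<Phi>" and s_eq: "s = p + q + g"
    using s unfolding graph_edges_iff g_def by auto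
  have "p + g \<in> R \<or> q + g \<in> R"
  proof (rule R_add_triple)
    show "p \<in> R" "q \<in> R" "g \<in> R" "p + q \<in> R" "p + q + g \<in> R"
      using p q g pqP sP edge_root_in_R Phi_in_R by (auto simp: s_eq)
    show "p + g \<noteq> 0" "q + g \<noteq> 0"
      using Phi_add_edge_root_nonzero p q g by auto
  qed
  then consider "p + g \<in> \<Phi>" | "q + g \<in> \<Phi>" | "edge_root (q + g)" | "edge_root (p + g)"
    using Phi_add_edge_root[OF p g] Phi_add_edge_root[OF q g] by blast
  then show ?thesis
  proof cases
    case 1
    then have "(p, p + g) \<in> E" "s = (p + g) + q"
      using p g by (auto simp: graph_edges_iff s_eq)
    then show ?thesis
      by blast
  next
    case 2
    then have "(q, q + g) \<in> E" "s = p + (q + g)"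
      using q g by (auto simp: graph_edges_iff s_eq)
    then show ?thesis
      by blast
  next
    case 3
    have "p - s = -(q + g)"
      by (simp add: s_eq)
    with 3 have "edge_root (p - s)"
      by (metis edge_root_uminus)
    then show ?thesis
      using sP p by (simp add: graph_edges_iff)
  next
    case 4
    have "q - s = -(p + g)"
      by (simp add: s_eq)
    with 4 have "edge_root (q - s)"
      by (metis edge_root_uminus)
    then show ?thesis
      using sP q by (simp add: graph_edges_iff)
  qed
qed

lemma sum_transport:
  assumes p: "p \<in> \<Phi>" and q: "q \<in> \<Phi>" and pq: "p + q \<in> R" and pp': "(p, p') \<in> E\<^sup>*"
    and sum_not_p: "(p + q, p) \<notin> E\<^sup>*"
  shows "\<exists>q'. (q, q') \<in> E\<^sup>* \<and> (p + q, p' + q') \<in> E\<^sup>*"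
  using pp'
proof (induction rule: rtrancl_induct)
  case (step p1 p2)
  then obtain q1 where qq1: "(q, q1) \<in> E\<^sup>*" and sum1: "(p + q, p1 + q1) \<in> E\<^sup>*"
    by blast
  have "p + q \<in> \<Phi>"
    using Phi_add_closed p q pq by blast
  then have "p1 + q1 \<in> R"
    using sum1 rtrancl_graph_edges_in_Phi Phi_in_R by blast
  moreover have "p1 \<in> \<Phi>" "q1 \<in> \<Phi>"
    using step.hyps(1) qq1 p q rtrancl_graph_edges_in_Phi by blast+
  ultimately consider "(p1 + q1, p2 + q1) \<in> E" | "(q1, q1 - (p2 - p1)) \<in> E" | "(p1 + q1, p2) \<in> E"
    using sum_edge_left step.hyps(2) by blast
  then show ?case
  proof cases
    case 1
    then show ?thesis
      using qq1 sum1 by (blast intro: rtrancl_into_rtrancl)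
  next
    case 2
    moreover have "p2 + (q1 - (p2 - p1)) = p1 + q1"
      by simp
    ultimately show ?thesis
      using qq1 sum1 by (metis rtrancl_into_rtrancl)
  next
    case 3
    then have "(p + q, p2) \<in> E\<^sup>*"
      using sum1 by (rule rtrancl_into_rtrancl[rotated])
    moreover have "(p2, p) \<in> E\<^sup>*"
      using rtrancl_graph_edges_sym step.hyps by (blast intro: rtrancl_into_rtrancl)
    ultimately show ?thesis
      using sum_not_p by (meson rtrancl_trans)
  qed
qed blast

lemma sum_decompose:
  assumes p: "p \<in> \<Phi>" and q: "q \<in> \<Phi>" and ss: "(p + q, s) \<in> E\<^sup>*"
    and sum_not_p: "(p + q, p) \<notin> E\<^sup>*" and sum_not_q: "(p + q, q) \<notin> E\<^sup>*"
  shows "\<exists>p' q'. (p, p') \<in> E\<^sup>* \<and> (q, q') \<in> E\<^sup>* \<and> s = p' + q'"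
  using ss
proof (induction rule: rtrancl_induct)
  case (step s1 s2)
  then obtain p1 q1 where pp1: "(p, p1) \<in> E\<^sup>*" and qq1: "(q, q1) \<in> E\<^sup>*" and s1: "s1 = p1 + q1"
    by blast
  have "p1 \<in> \<Phi>" "q1 \<in> \<Phi>"
    using pp1 qq1 p q rtrancl_graph_edges_in_Phi by blast+
  then consider p' where "(p1, p') \<in> E" "s2 = p' + q1" | q' where "(q1, q') \<in> E" "s2 = p1 + q'"
    | "(s2, p1) \<in> E" | "(s2, q1) \<in> E"
    using sum_edge_split step.hyps(2) s1 by blast
  then show ?case
  proof cases
    case 1
    then show ?thesis
      using pp1 qq1 by (blast intro: rtrancl_into_rtrancl)
  next
    case 2
    then show ?thesis
      using pp1 qq1 by (blast intro: rtrancl_into_rtrancl)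
  next
    case 3
    then have "(p + q, p1) \<in> E\<^sup>*"
      using step.hyps by (blast intro: rtrancl_into_rtrancl)
    then show ?thesis
      using sum_not_p rtrancl_graph_edges_sym[OF pp1] by (meson rtrancl_trans)
  next
    case 4
    then have "(p + q, q1) \<in> E\<^sup>*"
      using step.hyps by (blast intro: rtrancl_into_rtrancl)
    then show ?thesis
      using sum_not_q rtrancl_graph_edges_sym[OF qq1] by (meson rtrancl_trans)
  qed
qed blast

text \<open>\<open>x = (x - u) + u\<close> splits an element of the component of \<open>a + b\<close> into elements of the
  components of \<open>a\<close> and \<open>b\<close>; exchanging \<open>u\<close> for \<open>v\<close> leads into the component of \<open>a + b'\<close>.\<close>
definition sum_config :: "'a \<Rightarrow> 'a \<Rightarrow> 'a \<Rightarrow> 'a \<Rightarrow> 'a \<Rightarrow> 'a \<Rightarrow> bool" where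
  "sum_config a b b' x u v \<longleftrightarrow> (a, x - u) \<in> E\<^sup>* \<and> (b, u) \<in> E\<^sup>* \<and> (b, v) \<in> E\<^sup>*
      \<and> (a + b, x) \<in> E\<^sup>* \<and> (a + b', x - u + v) \<in> E\<^sup>*"

lemma sum_config_step:
  assumes a: "a \<in> \<Phi>" and b: "b \<in> \<Phi>" and abP: "a + b \<in> \<Phi>" and ab'P: "a + b' \<in> \<Phi>"
    and sum_not_b: "(a + b, b) \<notin> E\<^sup>*" and sum'_not_a: "(a + b', a) \<notin> E\<^sup>*"
    and cfg: "sum_config a b b' x u v" and uw: "(u, w) \<in> E"
  shows "(\<exists>x'. sum_config a b b' x' w v)
    \<or> (sum_config a b b' x w (v + (w - u)) \<and> (v, v + (w - u)) \<in> E)"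
proof -
  define a' where "a' = x - u"
  define g where "g = w - u"
  have aa': "(a, a') \<in> E\<^sup>*" and bu: "(b, u) \<in> E\<^sup>*" and bv: "(b, v) \<in> E\<^sup>*"
    and sum_x: "(a + b, u + a') \<in> E\<^sup>*" and sum'_x: "(a + b', a' + v) \<in> E\<^sup>*"
    using cfg unfolding sum_config_def a'_def by (auto simp: algebra_simps)
  have x_eq: "u + a' = x" and x_w: "x - w = a' - g"
    unfolding a'_def g_def by simp_all
  have a'P: "a' \<in> \<Phi>" and uP: "u \<in> \<Phi>" and vP: "v \<in> \<Phi>"
    using aa' bu bv a b by (auto intro: rtrancl_graph_edges_in_Phi)
  have xR: "u + a' \<in> R" and a'vR: "a' + v \<in> R"
    using sum_x sum'_x abP ab'P by (auto intro: rtrancl_graph_edges_in_Phi Phi_in_R)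
  have bw: "(b, w) \<in> E\<^sup>*"
    using bu uw by (rule rtrancl_into_rtrancl)
  consider "(u + a', w + a') \<in> E" | "(a', a' - g) \<in> E" | "(u + a', w) \<in> E"
    using sum_edge_left[OF uP a'P xR uw] unfolding g_def by blast
  then show ?thesis
  proof cases
    case 1
    then have "(a + b, w + a') \<in> E\<^sup>*"
      using sum_x by (rule rtrancl_into_rtrancl[rotated])
    then have "sum_config a b b' (w + a') w v"
      using aa' bw bv sum'_x unfolding sum_config_def by (simp add: add.commute)
    then show ?thesis
      by blast
  next
    case 2
    then have aa'': "(a, a' - g) \<in> E\<^sup>*"
      using aa' by (rule rtrancl_into_rtrancl[rotated])
    consider "(a' + v, a' - g + v) \<in> E" | "(v, v + g) \<in> E" | "(a' + v, a' - g) \<in> E"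
      using sum_edge_left[OF a'P vP a'vR 2] by (auto simp: algebra_simps)
    then show ?thesis
    proof cases
      case 1
      then have "(a + b', a' - g + v) \<in> E\<^sup>*"
        using sum'_x by (rule rtrancl_into_rtrancl[rotated])
      then have "sum_config a b b' x w v"
        using aa'' bw bv sum_x unfolding sum_config_def x_w x_eq by simp
      then show ?thesis
        by blast
    next
      case 2
      moreover have "x - w + (v + g) = a' + v"
        unfolding x_w by simp
      moreover have "(b, v + g) \<in> E\<^sup>*"
        using bv 2 by (rule rtrancl_into_rtrancl)
      ultimately have "sum_config a b b' x w (v + g)"
        using aa'' bw sum_x sum'_x unfolding sum_config_def x_w x_eq by simp
      then show ?thesis
        using 2 unfolding g_def by blast
    next
      case 3
      then have "(a + b', a) \<in> E\<^sup>*"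
        using sum'_x rtrancl_graph_edges_sym[OF aa''] by (meson rtrancl_into_rtrancl rtrancl_trans)
      then show ?thesis
        using sum'_not_a by simp
    qed
  next
    case 3
    then have "(a + b, b) \<in> E\<^sup>*"
      using sum_x rtrancl_graph_edges_sym[OF bw] by (meson rtrancl_into_rtrancl rtrancl_trans)
    then show ?thesis
      using sum_not_b by simp
  qed
qed

lemma sum_right_rtrancl:
  assumes a: "a \<in> \<Phi>" and b: "b \<in> \<Phi>" and bb': "(b, b') \<in> E\<^sup>*" and ab: "a + b \<in> R"
    and ab': "a + b' \<in> R" and sum_not_b: "(a + b, b) \<notin> E\<^sup>*" and sum'_not_a: "(a + b', a) \<notin> E\<^sup>*"
  shows "(a + b, a + b') \<in> E\<^sup>*"
proof (rule ccontr)
  assume sums_apart: "(a + b, a + b') \<notin> E\<^sup>*"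
  have abP: "a + b \<in> \<Phi>" and ab'P: "a + b' \<in> \<Phi>"
    using Phi_add_closed a b ab ab' bb' rtrancl_graph_edges_in_Phi by blast+
  have "(b, b') \<notin> E\<^sup>*"
  proof (rule no_linked_configuration[of "sum_config a b b'"])
    have "{u. \<exists>x v. sum_config a b b' x u v} \<subseteq> \<Phi>"
      using rtrancl_graph_edges_in_Phi[OF _ b] unfolding sum_config_def by blast
    then show "finite {u. \<exists>x v. sum_config a b b' x u v}"
      using finite_Phi by (rule finite_subset)
    show "\<not> sum_config a b b' x u u" for x u
    proof
      assume "sum_config a b b' x u u"
      then have "(a + b, x) \<in> E\<^sup>*" "(x, a + b') \<in> E\<^sup>*"
        using rtrancl_graph_edges_sym unfolding sum_config_def by auto
      then show False
        using sums_apart by (meson rtrancl_trans)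
    qed
    show "sum_config a b b' (a + b) b b'"
      using bb' by (simp add: sum_config_def)
  qed (rule sum_config_step[OF a b abP ab'P sum_not_b sum'_not_a])
  then show False
    using bb' by simp
qed

lemma sum_rtrancl_aux:
  assumes a: "a \<in> \<Phi>" and c: "c \<in> \<Phi>" and aa': "(a, a') \<in> E\<^sup>*" and cc': "(c, c') \<in> E\<^sup>*"
    and ac: "a + c \<in> R" and ac': "a' + c' \<in> R" and a_not_c: "(a, c) \<notin> E\<^sup>*"
    and sum_not_a: "(a + c, a) \<notin> E\<^sup>*"
  shows "(a + c, a' + c') \<in> E\<^sup>*"
proof (rule ccontr)
  assume sums_apart: "(a + c, a' + c') \<notin> E\<^sup>*"
  obtain cs where ccs: "(c, cs) \<in> E\<^sup>*" and sum_cs: "(a + c, a' + cs) \<in> E\<^sup>*"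
    using sum_transport[OF a c ac aa' sum_not_a] by blast
  have a'P: "a' \<in> \<Phi>" and csP: "cs \<in> \<Phi>" and c'P: "c' \<in> \<Phi>"
    using aa' ccs cc' a c by (auto intro: rtrancl_graph_edges_in_Phi)
  have "a + c \<in> \<Phi>"
    using Phi_add_closed a c ac by blast
  then have a'csR: "a' + cs \<in> R"
    using sum_cs by (auto intro: rtrancl_graph_edges_in_Phi Phi_in_R)
  have cs_c': "(cs, c') \<in> E\<^sup>*"
    using rtrancl_graph_edges_sym[OF ccs] cc' by (rule rtrancl_trans)
  have not_cs_c': "(a' + cs, a' + c') \<notin> E\<^sup>*"
    using sum_cs sums_apart by (meson rtrancl_trans)
  have "(a' + cs, a') \<notin> E\<^sup>*"
    using sum_cs rtrancl_graph_edges_sym[OF aa'] sum_not_a by (meson rtrancl_trans)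
  then have sum'_c': "(a' + c', c') \<in> E\<^sup>*"
    using sum_right_rtrancl[OF a'P c'P rtrancl_graph_edges_sym[OF cs_c'] ac' a'csR]
      not_cs_c' rtrancl_graph_edges_sym by blast
  show False
  proof (cases "(a' + cs, cs) \<in> E\<^sup>*")
    case True
    then have "(a + c, c') \<in> E\<^sup>*"
      using sum_cs cs_c' by (meson rtrancl_trans)
    then show False
      using sums_apart rtrancl_graph_edges_sym[OF sum'_c'] by (meson rtrancl_trans)
  next
    case False
    then have "(a' + c', a') \<in> E\<^sup>*"
      using sum_right_rtrancl[OF a'P csP cs_c' a'csR ac'] not_cs_c' by blast
    then have "(a, c) \<in> E\<^sup>*"
      using aa' sum'_c' rtrancl_graph_edges_sym rtrancl_graph_edges_sym[OF cc']
      by (meson rtrancl_trans)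
    then show False
      using a_not_c by simp
  qed
qed

text \<open>Addition is well defined on pairs of distinct components.\<close>
lemma sum_rtrancl:
  assumes a: "a \<in> \<Phi>" and c: "c \<in> \<Phi>" and aa': "(a, a') \<in> E\<^sup>*" and cc': "(c, c') \<in> E\<^sup>*"
    and ac: "a + c \<in> R" and ac': "a' + c' \<in> R" and a_not_c: "(a, c) \<notin> E\<^sup>*"
  shows "(a + c, a' + c') \<in> E\<^sup>*"
proof (cases "(a + c, a) \<in> E\<^sup>*")
  case False
  then show ?thesis
    using sum_rtrancl_aux[OF a c aa' cc' ac ac' a_not_c] by simp
next
  case sum_a: True
  show ?thesis
  proof (cases "(a' + c', a') \<in> E\<^sup>*")
    case True
    then show ?thesis
      using sum_a aa' rtrancl_graph_edges_sym by (meson rtrancl_trans)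
  next
    case False
    have a'P: "a' \<in> \<Phi>" and c'P: "c' \<in> \<Phi>"
      using aa' cc' a c by (auto intro: rtrancl_graph_edges_in_Phi)
    have "(a', c') \<notin> E\<^sup>*"
      using aa' rtrancl_graph_edges_sym[OF cc'] a_not_c by (meson rtrancl_trans)
    then have "(a' + c', a + c) \<in> E\<^sup>*"
      using sum_rtrancl_aux[OF a'P c'P rtrancl_graph_edges_sym[OF aa']
          rtrancl_graph_edges_sym[OF cc'] ac' ac _ False] by simp
    then show ?thesis
      by (rule rtrancl_graph_edges_sym)
  qed
qed

text \<open>\<open>u1 = (u1 - b) + b\<close> splits an element of the component of \<open>u\<close> into elements of the
  components of \<open>a\<close> and \<open>u - a\<close>; exchanging \<open>u1\<close> for \<open>v1\<close> leads into the component of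
  \<open>v - a\<close>.\<close>
definition diff_config :: "'a \<Rightarrow> 'a \<Rightarrow> 'a \<Rightarrow> 'a \<Rightarrow> 'a \<Rightarrow> 'a \<Rightarrow> bool" where
  "diff_config a u v b u1 v1 \<longleftrightarrow> (a, u1 - b) \<in> E\<^sup>* \<and> (u, u1) \<in> E\<^sup>* \<and> (u, v1) \<in> E\<^sup>*
      \<and> (u - a, b) \<in> E\<^sup>* \<and> (v - a, v1 - u1 + b) \<in> E\<^sup>*"

lemma diff_config_step:
  assumes a: "a \<in> \<Phi>" and u: "u \<in> \<Phi>" and ua: "u - a \<in> \<Phi>" and va: "v - a \<in> \<Phi>"
    and u_not_a: "(u, a) \<notin> E\<^sup>*" and u_not_ua: "(u, u - a) \<notin> E\<^sup>*"
    and cfg: "diff_config a u v b u1 v1" and u1w: "(u1, w) \<in> E"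
  shows "(\<exists>b'. diff_config a u v b' w v1)
    \<or> (diff_config a u v b w (v1 + (w - u1)) \<and> (v1, v1 + (w - u1)) \<in> E)"
proof -
  define a' where "a' = u1 - b"
  have aa': "(a, a') \<in> E\<^sup>*" and uu1: "(u, u1) \<in> E\<^sup>*" and uv1: "(u, v1) \<in> E\<^sup>*"
    and diff_b: "(u - a, b) \<in> E\<^sup>*" and diff_v1: "(v - a, v1 - a') \<in> E\<^sup>*"
    using cfg unfolding diff_config_def a'_def by (auto simp: algebra_simps)
  have a'P: "a' \<in> \<Phi>" and bP: "b \<in> \<Phi>" and v1P: "v1 \<in> \<Phi>" and v1a'P: "v1 - a' \<in> \<Phi>"
    using aa' diff_b uv1 diff_v1 a ua u va by (auto intro: rtrancl_graph_edges_in_Phi)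
  have uw: "(u, w) \<in> E\<^sup>*"
    using uu1 u1w by (rule rtrancl_into_rtrancl)
  have "(b + a', w) \<in> E"
    using u1w unfolding a'_def by simp
  then consider p' where "(b, p') \<in> E" "w = p' + a'" | q' where "(a', q') \<in> E" "w = b + q'"
    | "(w, b) \<in> E" | "(w, a') \<in> E"
    using sum_edge_split[OF bP a'P] by blast
  then show ?thesis
  proof cases
    case (1 p')
    have "(u - a, p') \<in> E\<^sup>*"
      using diff_b 1(1) by (rule rtrancl_into_rtrancl)
    then have "diff_config a u v p' w v1"
      using aa' uw uv1 diff_v1 1(2) unfolding diff_config_def by (simp add: algebra_simps)
    then show ?thesis
      by blast
  next
    case (2 q')
    have aq': "(a, q') \<in> E\<^sup>*"
      using aa' 2(1) by (rule rtrancl_into_rtrancl)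
    have "a' + (v1 - a') \<in> R"
      using v1P Phi_in_R by simp
    then consider "(a' + (v1 - a'), q' + (v1 - a')) \<in> E"
      | "(v1 - a', v1 - a' - (q' - a')) \<in> E" | "(a' + (v1 - a'), q') \<in> E"
      using sum_edge_left[OF a'P v1a'P _ 2(1)] by blast
    then show ?thesis
    proof cases
      case 1
      have w_eq: "q' + (v1 - a') = v1 + (w - u1)" "v1 + (w - u1) - w + b = v1 - a'" "w - b = q'"
        using 2(2) unfolding a'_def by simp_all
      with 1 have edge: "(v1, v1 + (w - u1)) \<in> E"
        by simp
      with uv1 have "(u, v1 + (w - u1)) \<in> E\<^sup>*"
        by (rule rtrancl_into_rtrancl)
      then have "diff_config a u v b w (v1 + (w - u1))"
        using aq' uw diff_b diff_v1 unfolding diff_config_def w_eq(2,3) by blast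
      with edge show ?thesis
        by blast
    next
      case 2
      then have "(v - a, v1 - q') \<in> E\<^sup>*"
        using diff_v1 by (simp add: rtrancl_into_rtrancl)
      then have "diff_config a u v b w v1"
        using aq' uw uv1 diff_b \<open>w = b + q'\<close> unfolding diff_config_def by (simp add: algebra_simps)
      then show ?thesis
        by blast
    next
      case 3
      then have "(u, q') \<in> E\<^sup>*"
        using uv1 by (simp add: rtrancl_into_rtrancl)
      then have "(u, a) \<in> E\<^sup>*"
        using rtrancl_graph_edges_sym[OF aq'] by (rule rtrancl_trans)
      then show ?thesis
        using u_not_a by simp
    qed
  next
    case 3
    then have "(u, u - a) \<in> E\<^sup>*"
      using uw rtrancl_graph_edges_sym[OF diff_b] by (meson rtrancl_into_rtrancl rtrancl_trans)
    then show ?thesis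
      using u_not_ua by simp
  next
    case 4
    then have "(u, a) \<in> E\<^sup>*"
      using uw rtrancl_graph_edges_sym[OF aa'] by (meson rtrancl_into_rtrancl rtrancl_trans)
    then show ?thesis
      using u_not_a by simp
  qed
qed

lemma diff_rtrancl_aux:
  assumes a: "a \<in> \<Phi>" and u: "u \<in> \<Phi>" and uv: "(u, v) \<in> E\<^sup>*" and ua: "u - a \<in> \<Phi>"
    and va: "v - a \<in> \<Phi>" and u_not_a: "(u, a) \<notin> E\<^sup>*" and u_not_ua: "(u, u - a) \<notin> E\<^sup>*"
  shows "(u - a, v - a) \<in> E\<^sup>*"
proof (rule ccontr)
  assume diffs_apart: "(u - a, v - a) \<notin> E\<^sup>*"
  have "(u, v) \<notin> E\<^sup>*"
  proof (rule no_linked_configuration[of "diff_config a u v"])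
    have "{u1. \<exists>b v1. diff_config a u v b u1 v1} \<subseteq> \<Phi>"
      using rtrancl_graph_edges_in_Phi[OF _ u] unfolding diff_config_def by blast
    then show "finite {u1. \<exists>b v1. diff_config a u v b u1 v1}"
      using finite_Phi by (rule finite_subset)
    show "\<not> diff_config a u v b u1 u1" for b u1
    proof
      assume "diff_config a u v b u1 u1"
      then have "(u - a, b) \<in> E\<^sup>*" "(b, v - a) \<in> E\<^sup>*"
        using rtrancl_graph_edges_sym unfolding diff_config_def by auto
      then show False
        using diffs_apart by (meson rtrancl_trans)
    qed
    show "diff_config a u v (u - a) u v"
      using uv by (simp add: diff_config_def)
  qed (rule diff_config_step[OF a u ua va u_not_a u_not_ua])
  then show False
    using uv by simp
qed

lemma diff_rtrancl:
  assumes a: "a \<in> \<Phi>" and u: "u \<in> \<Phi>" and uv: "(u, v) \<in> E\<^sup>*" and ua: "u - a \<in> \<Phi>"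
    and va: "v - a \<in> \<Phi>" and u_not_a: "(u, a) \<notin> E\<^sup>*"
  shows "(u - a, v - a) \<in> E\<^sup>*"
proof (rule ccontr)
  assume diffs_apart: "(u - a, v - a) \<notin> E\<^sup>*"
  have v: "v \<in> \<Phi>" and vu: "(v, u) \<in> E\<^sup>*"
    using uv u rtrancl_graph_edges_in_Phi rtrancl_graph_edges_sym by blast+
  have v_not_a: "(v, a) \<notin> E\<^sup>*"
    using uv u_not_a by (meson rtrancl_trans)
  have "(u, u - a) \<in> E\<^sup>*"
    using diff_rtrancl_aux[OF a u uv ua va u_not_a] diffs_apart by blast
  moreover have "(v, v - a) \<in> E\<^sup>*"
    using diff_rtrancl_aux[OF a v vu va ua v_not_a] diffs_apart rtrancl_graph_edges_sym by blast
  ultimately have "(u - a, v - a) \<in> E\<^sup>*"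
    using uv rtrancl_graph_edges_sym by (meson rtrancl_trans)
  then show False
    using diffs_apart by simp
qed

section \<open>Addition of components\<close>

lemma component_cases:
  assumes "X \<in> components Rpos \<Phi>"
  obtains x where "x \<in> \<Phi>" "X = E\<^sup>* `` {x}"
  using assms unfolding components_def quotient_def by blast

lemma component_subset_Phi: "X \<in> components Rpos \<Phi> \<Longrightarrow> X \<subseteq> \<Phi>"
  by (elim component_cases) (auto intro: rtrancl_graph_edges_in_Phi)

lemma component_rtrancl:
  assumes "X \<in> components Rpos \<Phi>" "y \<in> X" "z \<in> X"
  shows "(y, z) \<in> E\<^sup>*"
  using assms by (elim component_cases) (auto intro: rtrancl_trans rtrancl_graph_edges_sym)

lemma component_closed:
  assumes "X \<in> components Rpos \<Phi>" "y \<in> X" "(y, z) \<in> E\<^sup>*"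
  shows "z \<in> X"
  using assms by (elim component_cases) (auto intro: rtrancl_trans)

lemma components_eqI:
  assumes X: "X \<in> components Rpos \<Phi>" and Y: "Y \<in> components Rpos \<Phi>" and "y \<in> X" "y \<in> Y"
  shows "X = Y"
  using component_rtrancl[OF X] component_rtrancl[OF Y] component_closed[OF X]
    component_closed[OF Y] assms(3,4) by blast

lemma components_apart:
  assumes "X \<in> components Rpos \<Phi>" "Y \<in> components Rpos \<Phi>" "X \<noteq> Y" "x \<in> X" "y \<in> Y"
  shows "(x, y) \<notin> E\<^sup>*"
  using assms component_closed components_eqI by blast

lemma comp_add_commute: "comp_add R Rpos \<Phi> X Y = comp_add R Rpos \<Phi> Y X"
proof -
  have "comp_sumset R X Y = comp_sumset R Y X"
    unfolding comp_sumset_def by (auto; metis add.commute)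
  then show ?thesis
    unfolding comp_add_def Let_def by (cases "X = Y") auto
qed

lemma comp_add_SomeD:
  assumes X: "X \<in> components Rpos \<Phi>" and sum: "comp_add R Rpos \<Phi> X Y = Some W"
  shows "W \<in> components Rpos \<Phi> \<and> (\<exists>x\<in>X. \<exists>y\<in>Y. x + y \<in> W)"
proof -
  define Z where "Z = comp_sumset R X Y"
  define K where "K = components Rpos \<Phi>"
  define two where "two C \<longleftrightarrow> C \<in> K \<and> C \<noteq> X \<and> Z \<subseteq> X \<union> C \<and> Z \<inter> X \<noteq> {} \<and> Z \<inter> C \<noteq> {}" for C
  have def: "comp_add R Rpos \<Phi> X Y = (if Z = {} then None
      else if \<exists>C\<in>K. Z \<subseteq> C then Some (THE C. C \<in> K \<and> Z \<subseteq> C)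
      else if X = Y \<and> (\<exists>C. two C) then Some (THE C. two C) else None)"
    unfolding comp_add_def Let_def Z_def[symmetric] K_def[symmetric] two_def
    by (simp only: Bex_def conj_assoc)
  have "Z \<noteq> {}"
    using sum unfolding def by (auto split: if_splits)
  then obtain z where z: "z \<in> Z"
    by blast
  have meets: "\<exists>x\<in>X. \<exists>y\<in>Y. x + y \<in> C" if "z \<in> C" "z \<in> Z" for C z
    using that unfolding Z_def comp_sumset_def by blast
  show ?thesis
  proof (cases "\<exists>C\<in>K. Z \<subseteq> C")
    case True
    then obtain C where C: "C \<in> K" "Z \<subseteq> C"
      by blast
    have "(THE C. C \<in> K \<and> Z \<subseteq> C) = C"
      using C z components_eqI unfolding K_def by (intro the_equality) blast+
    then have "W = C"
      using sum True \<open>Z \<noteq> {}\<close> unfolding def by simp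
    then show ?thesis
      using C z meets unfolding K_def by blast
  next
    case False
    then obtain C where C: "two C" and "W = (THE C. two C)"
      using sum \<open>Z \<noteq> {}\<close> unfolding def by (auto split: if_splits)
    moreover have "C' = C" if C': "two C'" for C'
    proof -
      obtain z' where z': "z' \<in> Z" "z' \<in> C'"
        using C' unfolding two_def by blast
      have "z' \<notin> X"
        using C' z' components_eqI[OF _ X] unfolding two_def K_def by blast
      then show ?thesis
        using C' C z' components_eqI unfolding two_def K_def by blast
    qed
    ultimately have "W = C"
      using the_equality[of two C] by blast
    then show ?thesis
      using C meets unfolding two_def K_def by blast
  qed
qed

lemma comp_add_SomeI:
  assumes W: "W \<in> components Rpos \<Phi>" and ne: "comp_sumset R X Y \<noteq> {}"
    and sub: "comp_sumset R X Y \<subseteq> W"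
  shows "comp_add R Rpos \<Phi> X Y = Some W"
proof -
  have "(THE C. C \<in> components Rpos \<Phi> \<and> comp_sumset R X Y \<subseteq> C) = W"
    using W ne sub components_eqI by (intro the_equality) blast+
  then show ?thesis
    unfolding comp_add_def Let_def using W ne sub by auto
qed

lemma comp_add_left_cancel:
  assumes A: "A \<in> components Rpos \<Phi>" and B: "B \<in> components Rpos \<Phi>"
    and C: "C \<in> components Rpos \<Phi>"
    and AB: "comp_add R Rpos \<Phi> A B = Some D" and AC: "comp_add R Rpos \<Phi> A C = Some D"
    and "D \<noteq> A"
  shows "B = C"
proof -
  obtain a b where a: "a \<in> A" and b: "b \<in> B" and abD: "a + b \<in> D" and D: "D \<in> components Rpos \<Phi>"
    using comp_add_SomeD[OF A AB] by blast
  obtain a' c where a': "a' \<in> A" and c: "c \<in> C" and a'cD: "a' + c \<in> D"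
    using comp_add_SomeD[OF A AC] by blast
  have aP: "a \<in> \<Phi>" and bP: "b \<in> \<Phi>" and a'P: "a' \<in> \<Phi>" and cP: "c \<in> \<Phi>"
    using a b a' c A B C component_subset_Phi by blast+
  have "a' + c \<in> R"
    using a'cD D component_subset_Phi Phi_in_R by blast
  moreover have "(a' + c, a') \<notin> E\<^sup>*"
    using components_apart[OF D A] a'cD a' \<open>D \<noteq> A\<close> by blast
  ultimately obtain cs where ccs: "(c, cs) \<in> E\<^sup>*" and sum_cs: "(a' + c, a + cs) \<in> E\<^sup>*"
    using sum_transport[OF a'P cP _ component_rtrancl[OF A a' a]] by blast
  have csD: "a + cs \<in> D"
    using component_closed[OF D a'cD sum_cs] .
  have "(a + b, a) \<notin> E\<^sup>*"
    using components_apart[OF D A] abD a \<open>D \<noteq> A\<close> by blast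
  moreover have "cs \<in> \<Phi>"
    using ccs cP rtrancl_graph_edges_in_Phi by blast
  ultimately have "((a + b) - a, (a + cs) - a) \<in> E\<^sup>*"
    using diff_rtrancl[OF aP _ component_rtrancl[OF D abD csD]] bP abD D component_subset_Phi
    by auto
  then have "cs \<in> B"
    using component_closed[OF B b] by simp
  moreover have "cs \<in> C"
    using component_closed[OF C c ccs] .
  ultimately show ?thesis
    using components_eqI[OF B C] by blast
qed

lemma comp_add_absorb:
  assumes A: "A \<in> components Rpos \<Phi>" and B: "B \<in> components Rpos \<Phi>"
    and C: "C \<in> components Rpos \<Phi>" and D: "D \<in> components Rpos \<Phi>"
    and "D \<noteq> A" and "D \<noteq> B"
    and p: "p \<in> A" and q: "q \<in> B" and c: "c \<in> C"
    and pqD: "p + q \<in> D" and pqcD: "p + q + c \<in> D" and pc: "p + c \<in> R"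
  shows "comp_add R Rpos \<Phi> A C = Some A"
proof -
  have pP: "p \<in> \<Phi>" and qP: "q \<in> \<Phi>" and cP: "c \<in> \<Phi>" and pqP: "p + q \<in> \<Phi>"
    using p q c pqD A B C D component_subset_Phi by blast+
  have pcP: "p + c \<in> \<Phi>"
    using Phi_add_closed[OF pP cP pc] .
  have sum_not_p: "(p + q, p) \<notin> E\<^sup>*" and sum_not_q: "(p + q, q) \<notin> E\<^sup>*"
    using components_apart[OF D A] components_apart[OF D B] pqD p q \<open>D \<noteq> A\<close> \<open>D \<noteq> B\<close> by blast+
  have "((p + q) - q, (p + q + c) - q) \<in> E\<^sup>*"
    using diff_rtrancl[OF qP pqP component_rtrancl[OF D pqD pqcD]] pP pcP sum_not_q
    by (simp add: algebra_simps)
  then have pcA: "p + c \<in> A"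
    using component_closed[OF A p] by (simp add: algebra_simps)
  have "A \<noteq> C"
  proof
    assume "A = C"
    then obtain qs where qqs: "(q, qs) \<in> E\<^sup>*" and sum_qs: "(p + q, c + qs) \<in> E\<^sup>*"
      using sum_transport[OF pP qP _ component_rtrancl[OF A p] sum_not_p] c pqP Phi_in_R by blast
    have cqsD: "c + qs \<in> D"
      using component_closed[OF D pqD sum_qs] .
    have "(c + qs, c) \<notin> E\<^sup>*"
      using components_apart[OF D A] cqsD c \<open>A = C\<close> \<open>D \<noteq> A\<close> by blast
    moreover have "qs \<in> \<Phi>"
      using qqs qP rtrancl_graph_edges_in_Phi by blast
    ultimately have "((c + qs) - c, (p + q + c) - c) \<in> E\<^sup>*"
      using diff_rtrancl[OF cP _ component_rtrancl[OF D cqsD pqcD]] pqP cqsD D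
        component_subset_Phi by auto
    then have "(q, p + q) \<in> E\<^sup>*"
      using qqs by (simp add: rtrancl_trans)
    then show False
      using sum_not_q rtrancl_graph_edges_sym by blast
  qed
  then have p_not_c: "(p, c) \<notin> E\<^sup>*"
    using components_apart[OF A C] p c by blast
  show ?thesis
  proof (rule comp_add_SomeI[OF A])
    show "comp_sumset R A C \<noteq> {}"
      using p c pc unfolding comp_sumset_def by blast
    show "comp_sumset R A C \<subseteq> A"
    proof
      fix z
      assume "z \<in> comp_sumset R A C"
      then obtain a1 c1 where a1: "a1 \<in> A" and c1: "c1 \<in> C" and z: "z = a1 + c1" "z \<in> R"
        unfolding comp_sumset_def by blast
      then have "(p + c, a1 + c1) \<in> E\<^sup>*"
        using sum_rtrancl[OF pP cP component_rtrancl[OF A p a1] component_rtrancl[OF C c c1]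
            pc _ p_not_c] by simp
      then show "z \<in> A"
        using component_closed[OF A pcA] z by blast
    qed
  qed
qed

lemma comp_add_fixed_right:
  assumes A: "A \<in> components Rpos \<Phi>" and B: "B \<in> components Rpos \<Phi>"
    and C: "C \<in> components Rpos \<Phi>"
    and AB: "comp_add R Rpos \<Phi> A B = Some D" and DC: "comp_add R Rpos \<Phi> D C = Some D"
  shows "comp_add R Rpos \<Phi> A C = Some A \<or> comp_add R Rpos \<Phi> B C = Some B"
proof (cases "D = A \<or> D = B")
  case True
  then show ?thesis
    using DC by auto
next
  case False
  then have "D \<noteq> A" "D \<noteq> B"
    by auto
  obtain a b where a: "a \<in> A" and b: "b \<in> B" and abD: "a + b \<in> D" and D: "D \<in> components Rpos \<Phi>"
    using comp_add_SomeD[OF A AB] by blast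
  obtain d c where d: "d \<in> D" and c: "c \<in> C" and dcD: "d + c \<in> D"
    using comp_add_SomeD[OF D DC] by blast
  have "(a + b, a) \<notin> E\<^sup>*" "(a + b, b) \<notin> E\<^sup>*"
    using components_apart[OF D A] components_apart[OF D B] abD a b \<open>D \<noteq> A\<close> \<open>D \<noteq> B\<close>
    by blast+
  then obtain p q where "(a, p) \<in> E\<^sup>*" "(b, q) \<in> E\<^sup>*" and d_eq: "d = p + q"
    using sum_decompose component_rtrancl[OF D abD d] a b A B component_subset_Phi by blast
  then have p: "p \<in> A" and q: "q \<in> B"
    using component_closed A B a b by blast+
  have pP: "p \<in> \<Phi>" and qP: "q \<in> \<Phi>" and cP: "c \<in> \<Phi>" and dP: "d \<in> \<Phi>" and dcP: "d + c \<in> \<Phi>"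
    using p q c d dcD A B C D component_subset_Phi by blast+
  have "p + c \<in> R \<or> q + c \<in> R"
  proof (rule R_add_triple)
    show "p \<in> R" "q \<in> R" "c \<in> R" "p + q \<in> R" "p + q + c \<in> R"
      using pP qP cP dP dcP Phi_in_R d_eq by auto
    show "p + c \<noteq> 0" "q + c \<noteq> 0"
      using Phi_add_nonzero pP qP cP by auto
  qed
  then show ?thesis
  proof
    assume "p + c \<in> R"
    then show ?thesis
      using comp_add_absorb[OF A B C D \<open>D \<noteq> A\<close> \<open>D \<noteq> B\<close> p q c] d dcD d_eq by simp
  next
    assume "q + c \<in> R"
    moreover have "q + p \<in> D" "q + p + c \<in> D"
      using d dcD d_eq by (simp_all add: add.commute)
    ultimately show ?thesis
      using comp_add_absorb[OF B A C D \<open>D \<noteq> B\<close> \<open>D \<noteq> A\<close> q p c] by simp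
  qed
qed

lemma comp_add_assoc_right:
  assumes A: "A \<in> components Rpos \<Phi>" and B: "B \<in> components Rpos \<Phi>"
    and C: "C \<in> components Rpos \<Phi>"
    and AB: "comp_add R Rpos \<Phi> A B = Some D" and DC: "comp_add R Rpos \<Phi> D C = Some F"
    and BC: "comp_add R Rpos \<Phi> B C = Some F"
  shows "comp_add R Rpos \<Phi> A B = Some B \<or> comp_add R Rpos \<Phi> B C = Some C"
proof (cases "D = B \<or> F = C")
  case True
  then show ?thesis
    using AB BC by auto
next
  case False
  have D: "D \<in> components Rpos \<Phi>"
    using comp_add_SomeD[OF A AB] by blast
  have "B = D"
    using comp_add_left_cancel[OF C B D] BC DC False comp_add_commute by metis
  then show ?thesis
    using False by simp
qed

end

section \<open>Quotient root systems\<close>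

lemma qproj_unique:
  fixes J :: "'a::euclidean_space set"
  assumes w: "w \<in> orthogonal_comp (span J)" and vw: "v - w \<in> span J"
  shows "qproj J v = w"
  unfolding qproj_def
proof (rule the_equality)
  fix w'
  assume w': "w' \<in> orthogonal_comp (span J) \<and> v - w' \<in> span J"
  have "(v - w) - (v - w') \<in> span J"
    using vw w' by (blast intro: span_diff)
  then have "w' - w \<in> span J"
    by simp
  moreover have "w' - w \<in> orthogonal_comp (span J)"
    using w w' subspace_diff[OF subspace_orthogonal_comp] by blast
  ultimately have "w' - w = 0"
    using orthogonal_Int_0[OF subspace_span, of J] by blast
  then show "w' = w"
    by simp
qed (use assms in blast)

lemma qproj_decomp:
  fixes J :: "'a::euclidean_space set"
  shows "qproj J v \<in> orthogonal_comp (span J)" and "v - qproj J v \<in> span J"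
proof -
  obtain y z where "y \<in> span J" "z \<in> orthogonal_comp (span J)" "v = y + z"
    using subspace_sum_orthogonal_comp[OF subspace_span, of J] set_plus_elim by blast
  moreover from this have "qproj J v = z"
    by (intro qproj_unique) auto
  ultimately show "qproj J v \<in> orthogonal_comp (span J)" "v - qproj J v \<in> span J"
    by auto
qed

lemma linear_qproj: "linear (qproj J)"
proof (rule linearI)
  show "qproj J (x + y) = qproj J x + qproj J y" for x y
  proof (rule qproj_unique)
    show "qproj J x + qproj J y \<in> orthogonal_comp (span J)"
      using qproj_decomp(1) qproj_decomp(1) by (rule subspace_add[OF subspace_orthogonal_comp])
    have "(x - qproj J x) + (y - qproj J y) \<in> span J"
      using qproj_decomp(2) qproj_decomp(2) by (rule span_add)
    then show "x + y - (qproj J x + qproj J y) \<in> span J"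
      by (simp add: algebra_simps)
  qed
  show "qproj J (c *\<^sub>R x) = c *\<^sub>R qproj J x" for c x
  proof (rule qproj_unique)
    show "c *\<^sub>R qproj J x \<in> orthogonal_comp (span J)"
      using qproj_decomp(1) by (rule subspace_scale[OF subspace_orthogonal_comp])
    have "c *\<^sub>R (x - qproj J x) \<in> span J"
      using qproj_decomp(2) by (rule span_scale)
    then show "c *\<^sub>R x - c *\<^sub>R qproj J x \<in> span J"
      by (simp add: scaleR_diff_right)
  qed
qed

lemmas qproj_0 = real_vector.linear_0[OF linear_qproj]
  and qproj_add = real_vector.linear_add[OF linear_qproj]
  and qproj_diff = real_vector.linear_diff[OF linear_qproj]
  and qproj_uminus = real_vector.linear_neg[OF linear_qproj]
  and qproj_scaleR = linear_cmul[OF linear_qproj]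
  and qproj_sum = real_vector.linear_sum[OF linear_qproj]

lemma qproj_eq_0_iff: "qproj J v = 0 \<longleftrightarrow> v \<in> span J"
  using qproj_decomp(2)[of v J] qproj_unique[of 0 J v] subspace_0[OF subspace_orthogonal_comp] by auto

lemma orthogonal_comp_inner_cong:
  assumes "w \<in> orthogonal_comp (span J)" and "x - y \<in> span J"
  shows "w \<bullet> x = w \<bullet> y"
proof -
  have "(x - y) \<bullet> w = 0"
    using assms unfolding orthogonal_comp_def orthogonal_def by blast
  then show ?thesis
    by (simp add: inner_diff_left inner_diff_right inner_commute)
qed

lemma root_system_uminus:
  assumes rs: "root_system D" and a: "a \<in> D"
  shows "-a \<in> D"
proof -
  have "a \<bullet> a \<noteq> 0"
    using rs a unfolding root_system_def by auto
  then have "a - (2 * (a \<bullet> a) / (a \<bullet> a)) *\<^sub>R a = -a"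
    by (simp add: scaleR_2)
  moreover have "a - (2 * (a \<bullet> a) / (a \<bullet> a)) *\<^sub>R a \<in> D"
    using rs a unfolding root_system_def by blast
  ultimately show ?thesis
    by simp
qed

lemma root_system_add_of_inner_neg:
  assumes rs: "root_system D" and x: "x \<in> D" and y: "y \<in> D"
    and neg: "x \<bullet> y < 0" and nz: "x + y \<noteq> 0"
  shows "x + y \<in> D"
proof -
  have reflect: "b - (2 * (b \<bullet> a) / (a \<bullet> a)) *\<^sub>R a \<in> D" if "a \<in> D" "b \<in> D" for a b
    using rs that unfolding root_system_def by blast
  have xx: "x \<bullet> x > 0" and yy: "y \<bullet> y > 0"
    using rs x y unfolding root_system_def by auto
  have "2 * (x \<bullet> y) / (y \<bullet> y) \<in> \<int>" "2 * (y \<bullet> x) / (x \<bullet> x) \<in> \<int>"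
    using rs x y unfolding root_system_def by blast+
  then obtain m n :: int where m: "2 * (x \<bullet> y) / (y \<bullet> y) = m" and n: "2 * (y \<bullet> x) / (x \<bullet> x) = n"
    by (elim Ints_cases) metis
  have m_eq: "2 * (x \<bullet> y) = m * (y \<bullet> y)" and n_eq: "2 * (x \<bullet> y) = n * (x \<bullet> x)"
    using m n xx yy by (simp_all add: field_simps inner_commute)
  have "real_of_int m * (y \<bullet> y) < 0" "real_of_int n * (x \<bullet> x) < 0"
    using m_eq n_eq neg by linarith+
  then have "m < 0" "n < 0"
    using xx yy by (simp_all add: mult_less_0_iff)
  have "real_of_int (m * n) * ((x \<bullet> x) * (y \<bullet> y)) = (2 * (x \<bullet> y))\<^sup>2"
    using m_eq n_eq by (simp add: power2_eq_square algebra_simps)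
  also have "\<dots> \<le> 4 * ((x \<bullet> x) * (y \<bullet> y))"
    using Cauchy_Schwarz_ineq[of x y] by simp
  finally have "real_of_int (m * n) \<le> 4"
    by (rule mult_right_le_imp_le) (use xx yy in simp)
  then have "m * n \<le> 4"
    by (simp only: of_int_le_numeral_iff)
  consider "m = -1" | "n = -1" | "m \<le> -2" "n \<le> -2"
    using \<open>m < 0\<close> \<open>n < 0\<close> by linarith
  then show ?thesis
  proof cases
    case 1
    then have "x - (2 * (x \<bullet> y) / (y \<bullet> y)) *\<^sub>R y = x + y"
      using m by simp
    then show ?thesis
      using reflect[OF y x] by metis
  next
    case 2
    then have "y - (2 * (y \<bullet> x) / (x \<bullet> x)) *\<^sub>R x = x + y"
      using n by simp
    then show ?thesis
      using reflect[OF x y] by metis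
  next
    case 3
    have "-2 * n \<le> m * n"
      by (rule mult_right_mono_neg) (use 3 in linarith)+
    moreover have "m * -2 \<le> m * n"
      by (rule mult_left_mono_neg) (use 3 in linarith)+
    ultimately have "m = -2" "n = -2"
      using 3 \<open>m * n \<le> 4\<close> by linarith+
    then have "(x + y) \<bullet> (x + y) = 0"
      using m_eq n_eq by (simp add: inner_add_left inner_add_right inner_commute)
    then show ?thesis
      using nz by simp
  qed
qed

lemma QRS_uminus:
  assumes rs: "root_system D" and y: "y \<in> QRS D J"
  shows "-y \<in> QRS D J"
proof -
  obtain x where "x \<in> D" "y = qproj J x" "y \<noteq> 0"
    using y unfolding QRS_def by blast
  then have "-x \<in> D" "-y = qproj J (-x)" "-y \<noteq> 0"
    using root_system_uminus[OF rs] by (auto simp: qproj_uminus)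
  then show ?thesis
    unfolding QRS_def by blast
qed

text \<open>The reflections in the roots of \<open>J\<close> permute each fibre of the projection, so the sum
  of a fibre is orthogonal to \<open>J\<close>.\<close>
lemma root_fibre_sum_orthogonal:
  assumes rs: "root_system D" and JD: "J \<subseteq> D" and j: "j \<in> J"
  shows "(\<Sum>{x \<in> D. qproj J x = \<alpha>}) \<bullet> j = 0"
proof -
  define L where "L = {x \<in> D. qproj J x = \<alpha>}"
  define s where "s x = x - (2 * (x \<bullet> j) / (j \<bullet> j)) *\<^sub>R j" for x
  have "j \<noteq> 0"
    using rs j JD unfolding root_system_def by auto
  then have s_j: "s x \<bullet> j = - (x \<bullet> j)" for x
    unfolding s_def by (simp add: inner_diff_left)
  have s_s: "s (s x) = x" for x
    unfolding s_def[of "s x"] s_j by (simp add: s_def)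
  have "qproj J j = 0"
    using j by (simp add: qproj_eq_0_iff span_base)
  then have "qproj J (s x) = qproj J x" for x
    unfolding s_def by (simp add: qproj_diff qproj_scaleR)
  moreover have "s x \<in> D" if "x \<in> D" for x
    using rs that j JD unfolding s_def root_system_def by blast
  ultimately have s_L: "s x \<in> L" if "x \<in> L" for x
    using that unfolding L_def by simp
  have "(\<Sum>x\<in>L. s x \<bullet> j) = (\<Sum>x\<in>L. x \<bullet> j)"
    by (rule sum.reindex_bij_witness[where i = s and j = s]) (use s_s s_L in auto)
  then have "(\<Sum>x\<in>L. x \<bullet> j) = 0"
    unfolding s_j by (simp add: sum_negf)
  then show ?thesis
    unfolding L_def by (simp add: inner_sum_left)
qed

text \<open>Pairing the fibre sum over \<open>\<alpha>\<close> with a preimage \<open>b\<close> of \<open>\<beta>\<close> gives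
  \<open>card L * (\<alpha> \<bullet> \<beta>) < 0\<close>, so some root \<open>x\<close> over \<open>\<alpha>\<close> has \<open>x \<bullet> b < 0\<close> and \<open>x + b\<close> is a root.\<close>
lemma QRS_add_of_inner_neg:
  assumes rs: "root_system D" and JD: "J \<subseteq> D"
    and \<alpha>: "\<alpha> \<in> QRS D J" and \<beta>: "\<beta> \<in> QRS D J" and neg: "\<alpha> \<bullet> \<beta> < 0" and nz: "\<alpha> + \<beta> \<noteq> 0"
  shows "\<alpha> + \<beta> \<in> QRS D J"
proof -
  obtain a where a: "a \<in> D" "qproj J a = \<alpha>"
    using \<alpha> unfolding QRS_def by blast
  obtain b where b: "b \<in> D" "qproj J b = \<beta>"
    using \<beta> unfolding QRS_def by blast
  define L where "L = {x \<in> D. qproj J x = \<alpha>}"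
  have "finite L"
    using rs unfolding L_def root_system_def by simp
  then have "card L > 0"
    using a unfolding L_def by (auto simp: card_gt_0_iff)
  have "orthogonal y (\<Sum>L)" if "y \<in> span J" for y
  proof (rule orthogonal_commute[THEN iffD1], rule orthogonal_to_span[OF that])
    show "orthogonal (\<Sum>L) j" if "j \<in> J" for j
      using root_fibre_sum_orthogonal[OF rs JD that] unfolding L_def orthogonal_def .
  qed
  then have sum_perp: "\<Sum>L \<in> orthogonal_comp (span J)"
    unfolding orthogonal_comp_def by blast
  have "b - \<beta> \<in> span J"
    using qproj_decomp(2)[of b J] b(2) by simp
  with sum_perp have "(\<Sum>L) \<bullet> b = (\<Sum>L) \<bullet> \<beta>"
    by (rule orthogonal_comp_inner_cong)
  also have "\<dots> = (\<Sum>x\<in>L. \<beta> \<bullet> x)"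
    by (simp add: inner_sum_right inner_commute[of _ \<beta>])
  also have "\<dots> = (\<Sum>x\<in>L. \<beta> \<bullet> \<alpha>)"
  proof (rule sum.cong)
    fix x
    assume "x \<in> L"
    then have "x - \<alpha> \<in> span J"
      using qproj_decomp(2)[of x J] unfolding L_def by simp
    then show "\<beta> \<bullet> x = \<beta> \<bullet> \<alpha>"
      using qproj_decomp(1)[of J b] b(2) by (intro orthogonal_comp_inner_cong) simp_all
  qed simp
  also have "\<dots> = real (card L) * (\<alpha> \<bullet> \<beta>)"
    by (simp add: inner_commute)
  also have "\<dots> < 0"
    using \<open>card L > 0\<close> neg by (simp add: mult_pos_neg)
  finally have "(\<Sum>x\<in>L. x \<bullet> b) < 0"
    by (simp add: inner_sum_left)
  then obtain x where x: "x \<in> L" "x \<bullet> b < 0"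
    by (metis not_less sum_nonneg)
  have proj: "qproj J (x + b) = \<alpha> + \<beta>"
    using x(1) b(2) unfolding L_def by (simp add: qproj_add)
  then have "x + b \<noteq> 0"
    using nz by (auto simp: qproj_0)
  then have "x + b \<in> D"
    using root_system_add_of_inner_neg[OF rs _ b(1) x(2)] x(1) unfolding L_def by blast
  then show ?thesis
    using proj nz unfolding QRS_def by (metis DiffI image_eqI singletonD)
qed

text \<open>If neither \<open>\<alpha> + \<gamma>\<close> nor \<open>\<beta> + \<gamma>\<close> were a root, the previous lemma would make \<open>\<gamma>\<close> and
  \<open>\<alpha> + \<beta> + \<gamma>\<close> form non-acute angles with \<open>\<alpha>, \<beta>\<close> and \<open>-\<alpha>, -\<beta>\<close> respectively, forcing
  \<open>|\<alpha> + \<beta>|\<^sup>2 \<le> 0\<close>.\<close>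
lemma QRS_add_triple:
  assumes rs: "root_system D" and JD: "J \<subseteq> D"
    and \<alpha>: "\<alpha> \<in> QRS D J" and \<beta>: "\<beta> \<in> QRS D J" and \<gamma>: "\<gamma> \<in> QRS D J"
    and \<alpha>\<beta>: "\<alpha> + \<beta> \<in> QRS D J" and \<alpha>\<beta>\<gamma>: "\<alpha> + \<beta> + \<gamma> \<in> QRS D J"
    and nz1: "\<alpha> + \<gamma> \<noteq> 0" and nz2: "\<beta> + \<gamma> \<noteq> 0"
  shows "\<alpha> + \<gamma> \<in> QRS D J \<or> \<beta> + \<gamma> \<in> QRS D J"
proof (rule ccontr)
  assume not_roots: "\<not> (\<alpha> + \<gamma> \<in> QRS D J \<or> \<beta> + \<gamma> \<in> QRS D J)"
  define \<delta> where "\<delta> = \<alpha> + \<beta> + \<gamma>"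
  have "\<delta> + -\<alpha> = \<beta> + \<gamma>" "\<delta> + -\<beta> = \<alpha> + \<gamma>"
    unfolding \<delta>_def by (simp_all add: algebra_simps)
  then have "\<alpha> \<bullet> \<gamma> \<ge> 0" "\<beta> \<bullet> \<gamma> \<ge> 0" "\<delta> \<bullet> -\<alpha> \<ge> 0" "\<delta> \<bullet> -\<beta> \<ge> 0"
    using QRS_add_of_inner_neg[OF rs JD \<alpha> \<gamma> _ nz1] QRS_add_of_inner_neg[OF rs JD \<beta> \<gamma> _ nz2]
      QRS_add_of_inner_neg[OF rs JD \<alpha>\<beta>\<gamma>[folded \<delta>_def] QRS_uminus[OF rs \<alpha>]]
      QRS_add_of_inner_neg[OF rs JD \<alpha>\<beta>\<gamma>[folded \<delta>_def] QRS_uminus[OF rs \<beta>]]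
      nz1 nz2 not_roots by (metis not_le)+
  moreover have "(\<alpha> + \<beta>) \<bullet> (\<alpha> + \<beta>) > 0"
    using \<alpha>\<beta> unfolding QRS_def by auto
  moreover have "\<delta> \<bullet> (\<alpha> + \<beta>) = (\<alpha> + \<beta>) \<bullet> (\<alpha> + \<beta>) + \<alpha> \<bullet> \<gamma> + \<beta> \<bullet> \<gamma>"
    unfolding \<delta>_def by (simp add: inner_add_left inner_add_right inner_commute)
  moreover have "\<delta> \<bullet> (\<alpha> + \<beta>) = - (\<delta> \<bullet> -\<alpha>) - (\<delta> \<bullet> -\<beta>)"
    by (simp add: inner_add_right)
  ultimately show False
    by linarith
qed

lemma inj_on_qproj_base:
  assumes S: "independent S" and JS: "J \<subseteq> S"
  shows "inj_on (qproj J) (S - J)"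
proof (rule inj_onI, rule ccontr)
  fix x y
  assume x: "x \<in> S - J" and y: "y \<in> S - J" and "qproj J x = qproj J y" and "x \<noteq> y"
  then have "x - y \<in> span J"
    by (simp add: qproj_eq_0_iff[symmetric] qproj_diff)
  moreover have "span J \<subseteq> span (S - {x})"
    using JS x by (intro span_mono) blast
  ultimately have "x - y \<in> span (S - {x})"
    by blast
  moreover have "y \<in> span (S - {x})"
    using y \<open>x \<noteq> y\<close> by (intro span_base) blast
  ultimately have "x \<in> span (S - {x})"
    using span_add by fastforce
  then show False
    using S x unfolding dependent_def by blast
qed

lemma independent_QRS_base:
  assumes S: "independent S" and JS: "J \<subseteq> S"
  shows "independent (QRS_base S J)"
proof -
  have finS: "finite S" and finJ: "finite J"
    using S JS eucl.finiteI_independent finite_subset by blast+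
  have "e \<tau> = 0" if comb: "(\<Sum>\<tau>\<in>QRS_base S J. e \<tau> *\<^sub>R \<tau>) = 0" and \<tau>: "\<tau> \<in> QRS_base S J"
    for e \<tau>
  proof -
    define v where "v = (\<Sum>\<sigma>\<in>S - J. e (qproj J \<sigma>) *\<^sub>R \<sigma>)"
    have "qproj J v = (\<Sum>\<tau>\<in>QRS_base S J. e \<tau> *\<^sub>R \<tau>)"
      using sum.reindex[OF inj_on_qproj_base[OF S JS], of "\<lambda>\<tau>. e \<tau> *\<^sub>R \<tau>"]
      unfolding v_def QRS_base_def by (simp add: qproj_sum qproj_scaleR)
    then have "v \<in> span J"
      using comb by (simp add: qproj_eq_0_iff[symmetric])
    then obtain f where f: "v = (\<Sum>j\<in>J. f j *\<^sub>R j)"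
      using real_vector.span_finite[OF finJ] by blast
    define g where "g \<sigma> = (if \<sigma> \<in> J then - f \<sigma> else e (qproj J \<sigma>))" for \<sigma>
    have "(\<Sum>\<sigma>\<in>S. g \<sigma> *\<^sub>R \<sigma>) = (\<Sum>\<sigma>\<in>S - J. g \<sigma> *\<^sub>R \<sigma>) + (\<Sum>\<sigma>\<in>J. g \<sigma> *\<^sub>R \<sigma>)"
      by (rule sum.subset_diff[OF JS finS])
    also have "(\<Sum>\<sigma>\<in>S - J. g \<sigma> *\<^sub>R \<sigma>) = v"
      unfolding v_def g_def by (rule sum.cong) auto
    also have "(\<Sum>\<sigma>\<in>J. g \<sigma> *\<^sub>R \<sigma>) = - v"
      unfolding f g_def by (simp add: sum_negf)
    finally have "\<forall>\<sigma>\<in>S. g \<sigma> = 0"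
      using S unfolding eucl.independent_explicit by simp
    moreover obtain \<sigma> where "\<sigma> \<in> S - J" "\<tau> = qproj J \<sigma>"
      using \<tau> unfolding QRS_base_def by blast
    ultimately show "e \<tau> = 0"
      unfolding g_def by auto
  qed
  moreover have "finite (QRS_base S J)"
    using finS unfolding QRS_base_def by simp
  ultimately show ?thesis
    unfolding eucl.independent_explicit by blast
qed

definition int_cone :: "'a::real_vector set \<Rightarrow> 'a set" where
  "int_cone B = {x. \<exists>c::'a \<Rightarrow> int. x = (\<Sum>\<tau>\<in>B. of_int (c \<tau>) *\<^sub>R \<tau>) \<and> (\<forall>\<tau>\<in>B. c \<tau> \<ge> 0)}"

lemma QRS_pos_eq: "QRS_pos \<Delta> \<Sigma> J = QRS \<Delta> J \<inter> int_cone (QRS_base \<Sigma> J)"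
  unfolding QRS_pos_def int_cone_def by blast

lemma int_cone_add:
  assumes "x \<in> int_cone B" and "y \<in> int_cone B"
  shows "x + y \<in> int_cone B"
proof -
  obtain c d :: "'a \<Rightarrow> int" where "x = (\<Sum>\<tau>\<in>B. of_int (c \<tau>) *\<^sub>R \<tau>)" "\<forall>\<tau>\<in>B. c \<tau> \<ge> 0"
    and "y = (\<Sum>\<tau>\<in>B. of_int (d \<tau>) *\<^sub>R \<tau>)" "\<forall>\<tau>\<in>B. d \<tau> \<ge> 0"
    using assms unfolding int_cone_def by blast
  then have "x + y = (\<Sum>\<tau>\<in>B. of_int (c \<tau> + d \<tau>) *\<^sub>R \<tau>) \<and> (\<forall>\<tau>\<in>B. c \<tau> + d \<tau> \<ge> 0)"
    by (simp add: scaleR_add_left sum.distrib)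
  then show ?thesis
    unfolding int_cone_def mem_Collect_eq by (rule exI[where x = "\<lambda>\<tau>. c \<tau> + d \<tau>"])
qed

lemma int_cone_antisym:
  fixes B :: "'a::euclidean_space set"
  assumes B: "independent B" and x: "x \<in> int_cone B" and neg: "-x \<in> int_cone B"
  shows "x = 0"
proof -
  obtain c d :: "'a \<Rightarrow> int" where c: "x = (\<Sum>\<tau>\<in>B. of_int (c \<tau>) *\<^sub>R \<tau>)" "\<forall>\<tau>\<in>B. c \<tau> \<ge> 0"
    and d: "-x = (\<Sum>\<tau>\<in>B. of_int (d \<tau>) *\<^sub>R \<tau>)" "\<forall>\<tau>\<in>B. d \<tau> \<ge> 0"
    using x neg unfolding int_cone_def by blast
  have "(\<Sum>\<tau>\<in>B. of_int (c \<tau> + d \<tau>) *\<^sub>R \<tau>)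
      = (\<Sum>\<tau>\<in>B. of_int (c \<tau>) *\<^sub>R \<tau>) + (\<Sum>\<tau>\<in>B. of_int (d \<tau>) *\<^sub>R \<tau>)"
    by (simp add: scaleR_add_left sum.distrib)
  also have "\<dots> = 0"
    unfolding c(1)[symmetric] d(1)[symmetric] by simp
  finally have "(\<Sum>\<tau>\<in>B. of_int (c \<tau> + d \<tau>) *\<^sub>R \<tau>) = 0" .
  then have "\<forall>\<tau>\<in>B. real_of_int (c \<tau> + d \<tau>) = 0"
    using B[unfolded eucl.independent_explicit, THEN conjunct2, rule_format,
        of "\<lambda>\<tau>. real_of_int (c \<tau> + d \<tau>)"] by blast
  then have "\<forall>\<tau>\<in>B. c \<tau> = 0"
    using c(2) d(2) by fastforce
  then show ?thesis
    unfolding c(1) by simp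
qed

lemma qproj_in_int_cone:
  assumes S: "independent S" and JS: "J \<subseteq> S" and c: "\<forall>\<sigma>\<in>S. c \<sigma> \<ge> 0"
  shows "qproj J (\<Sum>\<sigma>\<in>S. of_int (c \<sigma>) *\<^sub>R \<sigma>) \<in> int_cone (QRS_base S J)"
proof -
  have inj: "inj_on (qproj J) (S - J)"
    using S JS by (rule inj_on_qproj_base)
  define c' where "c' = c \<circ> inv_into (S - J) (qproj J)"
  have "qproj J (\<Sum>\<sigma>\<in>S. of_int (c \<sigma>) *\<^sub>R \<sigma>) = (\<Sum>\<sigma>\<in>S. of_int (c \<sigma>) *\<^sub>R qproj J \<sigma>)"
    by (simp add: qproj_sum qproj_scaleR)
  also have "\<dots> = (\<Sum>\<sigma>\<in>S - J. of_int (c \<sigma>) *\<^sub>R qproj J \<sigma>)"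
    using S JS by (intro sum.mono_neutral_right)
      (auto simp: eucl.finiteI_independent qproj_eq_0_iff span_base)
  also have "\<dots> = (\<Sum>\<tau>\<in>QRS_base S J. of_int (c' \<tau>) *\<^sub>R \<tau>)"
    unfolding QRS_base_def sum.reindex[OF inj] c'_def using inj by simp
  finally have "qproj J (\<Sum>\<sigma>\<in>S. of_int (c \<sigma>) *\<^sub>R \<sigma>) = (\<Sum>\<tau>\<in>QRS_base S J. of_int (c' \<tau>) *\<^sub>R \<tau>)" .
  moreover have "\<forall>\<tau>\<in>QRS_base S J. c' \<tau> \<ge> 0"
    using c unfolding c'_def QRS_base_def by (auto simp: inv_into_f_f[OF inj])
  ultimately show ?thesis
    unfolding int_cone_def by blast
qed

lemma qproj_root_in_int_cone:
  assumes base: "is_base D S" and JS: "J \<subseteq> S" and a: "a \<in> D"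
  shows "qproj J a \<in> int_cone (QRS_base S J) \<or> - qproj J a \<in> int_cone (QRS_base S J)"
proof -
  have S: "independent S"
    using base unfolding is_base_def by blast
  obtain c :: "'a \<Rightarrow> int" where a_eq: "a = (\<Sum>\<sigma>\<in>S. of_int (c \<sigma>) *\<^sub>R \<sigma>)"
    and signs: "(\<forall>\<sigma>\<in>S. c \<sigma> \<ge> 0) \<or> (\<forall>\<sigma>\<in>S. c \<sigma> \<le> 0)"
    using base a unfolding is_base_def by blast
  from signs show ?thesis
  proof
    assume "\<forall>\<sigma>\<in>S. c \<sigma> \<ge> 0"
    then show ?thesis
      using qproj_in_int_cone[OF S JS] unfolding a_eq by blast
  next
    assume "\<forall>\<sigma>\<in>S. c \<sigma> \<le> 0"
    then have "qproj J (\<Sum>\<sigma>\<in>S. of_int (- c \<sigma>) *\<^sub>R \<sigma>) \<in> int_cone (QRS_base S J)"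
      by (intro qproj_in_int_cone[OF S JS]) simp
    moreover have "qproj J (\<Sum>\<sigma>\<in>S. of_int (- c \<sigma>) *\<^sub>R \<sigma>) = - qproj J a"
      unfolding a_eq by (simp add: sum_negf qproj_uminus)
    ultimately show ?thesis
      by simp
  qed
qed

lemma closed_positive_subset_QRS:
  assumes rs: "root_system \<Delta>" and base: "is_base \<Delta> \<Sigma>" and J: "J \<subseteq> \<Sigma>"
    and \<Phi>: "\<Phi> \<subseteq> QRS_pos \<Delta> \<Sigma> J" and closed: "closed_in_rs (QRS \<Delta> J) \<Phi>"
  shows "closed_positive_subset (QRS \<Delta> J) (QRS_pos \<Delta> \<Sigma> J) \<Phi>"
proof unfold_locales
  have JD: "J \<subseteq> \<Delta>" and indep: "independent (QRS_base \<Sigma> J)"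
    using J base independent_QRS_base unfolding is_base_def by blast+
  show "finite (QRS \<Delta> J)"
    using rs unfolding QRS_def root_system_def by simp
  show "x \<in> QRS \<Delta> J \<Longrightarrow> -x \<in> QRS \<Delta> J" for x
    using rs by (rule QRS_uminus)
  show "QRS_pos \<Delta> \<Sigma> J \<subseteq> QRS \<Delta> J"
    unfolding QRS_pos_eq by blast
  show "x \<in> QRS_pos \<Delta> \<Sigma> J \<or> -x \<in> QRS_pos \<Delta> \<Sigma> J" if "x \<in> QRS \<Delta> J" for x
    using that qproj_root_in_int_cone[OF base J] QRS_uminus[OF rs that]
    unfolding QRS_pos_eq QRS_def by blast
  show "-x \<notin> QRS_pos \<Delta> \<Sigma> J" if "x \<in> QRS_pos \<Delta> \<Sigma> J" for x
    using that int_cone_antisym[OF indep] unfolding QRS_pos_eq QRS_def by blast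
  show "x + y \<in> QRS_pos \<Delta> \<Sigma> J"
    if "x \<in> QRS_pos \<Delta> \<Sigma> J" "y \<in> QRS_pos \<Delta> \<Sigma> J" "x + y \<in> QRS \<Delta> J" for x y
    using that int_cone_add unfolding QRS_pos_eq by blast
  show "\<alpha> + \<gamma> \<in> QRS \<Delta> J \<or> \<beta> + \<gamma> \<in> QRS \<Delta> J"
    if "\<alpha> \<in> QRS \<Delta> J" "\<beta> \<in> QRS \<Delta> J" "\<gamma> \<in> QRS \<Delta> J" "\<alpha> + \<beta> \<in> QRS \<Delta> J"
      "\<alpha> + \<beta> + \<gamma> \<in> QRS \<Delta> J" "\<alpha> + \<gamma> \<noteq> 0" "\<beta> + \<gamma> \<noteq> 0" for \<alpha> \<beta> \<gamma>
    using QRS_add_triple[OF rs JD that] .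
  show "\<Phi> \<subseteq> QRS_pos \<Delta> \<Sigma> J"
    by (rule \<Phi>)
  show "x + y \<in> \<Phi>" if "x \<in> \<Phi>" "y \<in> \<Phi>" "x + y \<in> QRS \<Delta> J" for x y
    using closed that unfolding closed_in_rs_def by blast
qed

theorem proposition4p24:
  fixes \<Delta> \<Sigma> J \<Phi> A B C :: "'a::euclidean_space set"
  defines "R \<equiv> QRS \<Delta> J"
      and "Rpos \<equiv> QRS_pos \<Delta> \<Sigma> J"
  assumes rs: "root_system \<Delta>"
      and base: "is_base \<Delta> \<Sigma>"
      and J: "J \<subset> \<Sigma>"
      and inv: "inversion_set R Rpos \<Phi>"
      and A: "A \<in> components Rpos \<Phi>"
      and B: "B \<in> components Rpos \<Phi>"
      and C: "C \<in> components Rpos \<Phi>"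
  shows "(\<forall>D. comp_add R Rpos \<Phi> A B = Some D \<and> comp_add R Rpos \<Phi> A C = Some D \<and> D \<noteq> A
             \<longrightarrow> B = C)
       \<and> (\<forall>D. comp_add R Rpos \<Phi> A B = Some D \<and> comp_add R Rpos \<Phi> D C = Some D
             \<longrightarrow> comp_add R Rpos \<Phi> A C = Some A \<or> comp_add R Rpos \<Phi> B C = Some B)
       \<and> (\<forall>D E. comp_add R Rpos \<Phi> A B = Some D \<and> comp_add R Rpos \<Phi> D C = Some E
                \<and> comp_add R Rpos \<Phi> B C = Some E
             \<longrightarrow> comp_add R Rpos \<Phi> A B = Some B \<or> comp_add R Rpos \<Phi> B C = Some C)"
proof -
  interpret closed_positive_subset R Rpos \<Phi>
    using closed_positive_subset_QRS[OF rs base] J inv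
    unfolding inversion_set_def R_def Rpos_def by blast
  show ?thesis
    using comp_add_left_cancel[OF A B C] comp_add_fixed_right[OF A B C]
      comp_add_assoc_right[OF A B C] by blast
qed

end
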